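(* Let $\mathbf a=(a_1,\ldots,a_n)\in\mathbb Z_{\geq1}^n$ and $\mathbf b=(b_1,\ldots,b_m)\in\mathbb Z_{\geq1}^m$ with $\gcd(a_i,b_j)=1$ for all $1\leq i\leq n$ and $1\leq j\leq m$. Then the generators $\mathbf g_{i,j}$ are all minimal solutions, and the set of extreme points of $\mathrm{conv}(\mathcal H(\mathbf a,\mathbf b))$ is $\{\mathbf 0\}\cup\{\mathbf g_{i,j}:1\leq i\leq n,\ 1\leq j\leq m\}$.
   Context: A solution is a pair $(\mathbf x,\mathbf y)\in\mathbb Z_{\geq0}^n\times\mathbb Z_{\geq0}^m$ with $\sum_i x_ia_i=\sum_j y_jb_j$; it is minimal if it is nonzero and cannot be written as the sum of two nonzero solutions. $\mathcal H(\mathbf a,\mathbf b)$ is the set of minimal solutions (the Hilbert basis of the cone $\{(\mathbf x,\mathbf y)\in\mathbb R_{\geq0}^{n+m}:\mathbf a\cdot\mathbf x=\mathbf b\cdot\mathbf y\}$, which by convention here also contains $\mathbf 0$ when taking its convex hull). With $\mathbf e_k$ the $k$th standard unit vector of $\mathbb R^{n+m}$, the generator $\mathbf g_{i,j}=b_j\mathbf e_i+a_i\mathbf e_{n+j}$ is the solution with only nonzero coordinates $x_i=b_j$, $y_j=a_i$. *)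

theory Defs
  imports "HOL-Analysis.Analysis"
begin

text \<open>A solution is a pair (x,y) of nonnegative integer vectors indexed by the finite
  types 'n and 'm (so n = CARD('n), m = CARD('m)) with a.x = b.y.\<close>

definition is_solution :: "('n::finite \<Rightarrow> nat) \<Rightarrow> ('m::finite \<Rightarrow> nat)
    \<Rightarrow> ('n \<Rightarrow> nat) \<times> ('m \<Rightarrow> nat) \<Rightarrow> bool" where
  "is_solution a b s \<longleftrightarrow> (\<Sum>i\<in>UNIV. fst s i * a i) = (\<Sum>j\<in>UNIV. snd s j * b j)"

definition zero_sol :: "('n \<Rightarrow> nat) \<times> ('m \<Rightarrow> nat)" where
  "zero_sol = ((\<lambda>_. 0), (\<lambda>_. 0))"

definition add_sol :: "('n \<Rightarrow> nat) \<times> ('m \<Rightarrow> nat) \<Rightarrow> ('n \<Rightarrow> nat) \<times> ('m \<Rightarrow> nat)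
    \<Rightarrow> ('n \<Rightarrow> nat) \<times> ('m \<Rightarrow> nat)" where
  "add_sol s t = ((\<lambda>i. fst s i + fst t i), (\<lambda>j. snd s j + snd t j))"

definition is_minimal_solution :: "('n::finite \<Rightarrow> nat) \<Rightarrow> ('m::finite \<Rightarrow> nat)
    \<Rightarrow> ('n \<Rightarrow> nat) \<times> ('m \<Rightarrow> nat) \<Rightarrow> bool" where
  "is_minimal_solution a b s \<longleftrightarrow> is_solution a b s \<and> s \<noteq> zero_sol \<and>
     \<not> (\<exists>u v. is_solution a b u \<and> is_solution a b v \<and> u \<noteq> zero_sol \<and> v \<noteq> zero_sol
              \<and> s = add_sol u v)"

definition hilbert_basis :: "('n::finite \<Rightarrow> nat) \<Rightarrow> ('m::finite \<Rightarrow> nat)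
    \<Rightarrow> (('n \<Rightarrow> nat) \<times> ('m \<Rightarrow> nat)) set" where
  "hilbert_basis a b = {s. is_minimal_solution a b s}"

definition emb :: "('n::finite \<Rightarrow> nat) \<times> ('m::finite \<Rightarrow> nat) \<Rightarrow> (real^'n) \<times> (real^'m)" where
  "emb s = ((\<chi> i. real (fst s i)), (\<chi> j. real (snd s j)))"

definition gen :: "('n \<Rightarrow> nat) \<Rightarrow> ('m \<Rightarrow> nat) \<Rightarrow> 'n \<Rightarrow> 'm
    \<Rightarrow> ('n \<Rightarrow> nat) \<times> ('m \<Rightarrow> nat)" where
  "gen a b i j = ((\<lambda>k. if k = i then b j else 0), (\<lambda>k. if k = j then a i else 0))"

end

theory Submission
  imports Defs "HOL-Library.Multiset" "HOL-Number_Theory.Cong"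
begin

(* Coprimality makes g_ij minimal: in a splitting g_ij = u + v the part u lives on x_i and y_j,
   so u_i a_i = u_j b_j, and b_j divides u_i <= b_j.

   Every minimal solution (x, y) of weight A = a.x satisfies |x| |y| <= A, so
   (x, y) = sum_ij (x_i y_j / A) g_ij is a convex combination of 0 and the generators; hence
   the Hilbert basis and 0 have the same convex hull as 0 and the g_ij. For the bound, write x
   and y as words (index i repeated x_i times) and compare prefix weights modulo A: the |x| |y|
   differences of a prefix weight of x and one of y are pairwise incongruent, because a
   coincidence cuts out a proper nonzero subsolution made of a segment of the x-word and a
   cyclic segment of the y-word.

   Finally, 0 and each g_ij are strictly separated from all other generators by a linear
   functional, so all of them are extreme points. *)

lemma sum_UNIV_eq_single:
  fixes f :: "'a::finite \<Rightarrow> 'b::comm_monoid_add"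
  assumes "\<And>k. k \<noteq> i \<Longrightarrow> f k = 0"
  shows "(\<Sum>k\<in>UNIV. f k) = f i"
  using sum.mono_neutral_right[of UNIV "{i}" f] assms by auto

lemma is_solution_gen: "is_solution a b (gen a b i j)"
  unfolding is_solution_def by (subst (1 2) sum_UNIV_eq_single) (auto simp: gen_def)

lemma is_minimal_solution_gen:
  fixes a :: "'n::finite \<Rightarrow> nat" and b :: "'m::finite \<Rightarrow> nat"
  assumes "0 < a i" and "0 < b j" and "coprime (a i) (b j)"
  shows "is_minimal_solution a b (gen a b i j)"
  unfolding is_minimal_solution_def
proof (intro conjI notI)
  show "is_solution a b (gen a b i j)" by (rule is_solution_gen)
  show "gen a b i j = zero_sol \<Longrightarrow> False"
    using \<open>0 < b j\<close> by (auto simp: gen_def zero_sol_def fun_eq_iff dest: spec[of _ i])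
  assume "\<exists>u v. is_solution a b u \<and> is_solution a b v \<and> u \<noteq> zero_sol \<and> v \<noteq> zero_sol
    \<and> gen a b i j = add_sol u v"
  then obtain u v where u: "is_solution a b u" and "u \<noteq> zero_sol" "v \<noteq> zero_sol"
    and split: "gen a b i j = add_sol u v" by blast
  have coord: "fst u k + fst v k = (if k = i then b j else 0)"
    "snd u l + snd v l = (if l = j then a i else 0)" for k l
    using split by (simp_all add: gen_def add_sol_def prod_eq_iff fun_eq_iff)
  then have supp: "\<And>k. k \<noteq> i \<Longrightarrow> fst u k = 0 \<and> fst v k = 0"
    "\<And>l. l \<noteq> j \<Longrightarrow> snd u l = 0 \<and> snd v l = 0"
    by (metis add_is_0)+
  have eq: "fst u i * a i = snd u j * b j"
    using u supp unfolding is_solution_def by (subst (asm) (1 2) sum_UNIV_eq_single) auto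
  then have "b j dvd fst u i"
    using \<open>coprime (a i) (b j)\<close> by (metis coprime_commute coprime_dvd_mult_left_iff dvd_triv_right)
  moreover have "fst u i \<le> b j" using coord(1)[of i] by simp
  ultimately consider "fst u i = 0" | "fst u i = b j"
    by (metis dvd_imp_le le_antisym neq0_conv)
  then show False
  proof cases
    case 1
    then have "snd u j = 0" using eq \<open>0 < b j\<close> by simp
    then have "u = zero_sol"
      using 1 supp unfolding zero_sol_def prod_eq_iff fun_eq_iff by (metis fst_conv snd_conv)
    with \<open>u \<noteq> zero_sol\<close> show False ..
  next
    case 2
    then have "snd u j = a i" using eq \<open>0 < b j\<close> by simp
    then have "fst v i = 0" "snd v j = 0" using 2 coord(1)[of i] coord(2)[of j] by simp_all
    then have "v = zero_sol"
      using supp unfolding zero_sol_def prod_eq_iff fun_eq_iff by (metis fst_conv snd_conv)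
    with \<open>v \<noteq> zero_sol\<close> show False ..
  qed
qed

lemma sum_list_map_take_less:
  fixes f :: "'a \<Rightarrow> nat"
  assumes "\<And>x. 0 < f x" and "k < length xs"
  shows "sum_list (map f (take k xs)) < sum_list (map f xs)"
proof -
  have "drop k xs = xs ! k # drop (Suc k) xs"
    using assms(2) by (rule Cons_nth_drop_Suc[symmetric])
  then have "sum_list (map f xs)
      = sum_list (map f (take k xs)) + (f (xs ! k) + sum_list (map f (drop (Suc k) xs)))"
    by (metis append_take_drop_id map_append sum_list_append list.map(2) sum_list.Cons)
  then show ?thesis using assms(1)[of "xs ! k"] by linarith
qed

lemma sum_list_map_take_add:
  "sum_list (map f (take (k + d) xs))
    = sum_list (map f (take k xs)) + sum_list (map f (take d (drop k xs)))"
  by (simp add: take_add)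

lemma mset_take_drop_subseteq: "mset (take d (drop k xs)) \<subseteq># mset xs"
  by (metis append_take_drop_id mset_append mset_subset_eq_add_left mset_subset_eq_add_right
      subset_mset.order_trans)

lemma mset_take_drop_subset:
  assumes "k + d < length xs"
  shows "mset (take d (drop k xs)) \<subset># mset xs"
proof -
  have "length (take d (drop k xs)) < length xs" using assms by simp
  then have "mset (take d (drop k xs)) \<noteq> mset xs" by (metis mset_eq_length less_irrefl)
  then show ?thesis by (simp add: mset_take_drop_subseteq subset_mset.le_neq_trans)
qed

lemma mset_drop_append_take_subseteq:
  assumes "l' \<le> l"
  shows "mset (drop l xs @ take l' xs) \<subseteq># mset xs"
proof -
  have "mset (take l' xs) \<subseteq># mset (take l xs)"
    using assms by (metis min.absorb1 mset_take_drop_subseteq drop_0 take_take)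
  then have "mset (drop l xs @ take l' xs) \<subseteq># mset (drop l xs) + mset (take l xs)"
    by (simp add: subset_mset.add_left_mono)
  also have "\<dots> = mset xs" by (metis append_take_drop_id mset_append add.commute)
  finally show ?thesis .
qed

lemma dvd_less_double_imp_eq:
  fixes m n :: nat
  assumes "n dvd m" and "0 < m" and "m < 2 * n"
  shows "m = n"
proof -
  obtain c where c: "m = n * c" using assms(1) by (rule dvdE)
  then have "0 < c" "c < 2" using assms(2,3) by simp_all
  then show ?thesis using c by simp
qed

locale indecomposable_words =
  fixes a :: "'i \<Rightarrow> nat" and b :: "'j \<Rightarrow> nat" and xs :: "'i list" and ys :: "'j list"
  assumes pos_a: "0 < a i" and pos_b: "0 < b j"
    and balanced: "sum_list (map a xs) = sum_list (map b ys)"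
    and indecomposable: "\<And>xs' ys'. mset xs' \<subset># mset xs \<Longrightarrow> mset ys' \<subseteq># mset ys \<Longrightarrow>
      sum_list (map a xs') = sum_list (map b ys') \<Longrightarrow> xs' = [] \<and> ys' = []"
begin

abbreviation total :: nat where "total \<equiv> sum_list (map a xs)"
abbreviation prefix_x :: "nat \<Rightarrow> nat" where "prefix_x k \<equiv> sum_list (map a (take k xs))"
abbreviation prefix_y :: "nat \<Rightarrow> nat" where "prefix_y l \<equiv> sum_list (map b (take l ys))"

lemma prefix_x_less: "k < length xs \<Longrightarrow> prefix_x k < total"
  using pos_a by (rule sum_list_map_take_less)

lemma prefix_y_less: "l < length ys \<Longrightarrow> prefix_y l < total"
  using sum_list_map_take_less[of b l ys, OF pos_b] by (simp add: balanced)

lemma congruent_shifted_prefixes: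
  assumes "k + d < length xs" and "l + e < length ys"
    and "[prefix_x k + prefix_y (l + e) = prefix_x (k + d) + prefix_y l] (mod total)"
  shows "d = 0 \<and> e = 0"
proof -
  let ?xs' = "take d (drop k xs)" and ?ys' = "take e (drop l ys)"
  have "[(prefix_x k + prefix_y l) + sum_list (map b ?ys') =
      (prefix_x k + prefix_y l) + sum_list (map a ?xs')] (mod total)"
    using assms(3) unfolding sum_list_map_take_add by (simp add: ac_simps)
  then have "[sum_list (map b ?ys') = sum_list (map a ?xs')] (mod total)"
    by (simp add: cong_add_lcancel_nat)
  moreover have "sum_list (map a ?xs') < total"
    using prefix_x_less[OF assms(1)] by (simp add: sum_list_map_take_add)
  moreover have "sum_list (map b ?ys') < total"
    using prefix_y_less[OF assms(2)] by (simp add: sum_list_map_take_add)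
  ultimately have "sum_list (map a ?xs') = sum_list (map b ?ys')"
    by (metis cong_less_modulus_unique_nat)
  then have "?xs' = [] \<and> ?ys' = []"
    using assms(1) by (intro indecomposable mset_take_drop_subset mset_take_drop_subseteq)
  then show ?thesis using assms(1,2) by simp
qed

lemma wrapped_prefixes_not_congruent:
  assumes "k + d < length xs" and "l + e < length ys" and "0 < e"
  shows "\<not> [prefix_x k + prefix_y l = prefix_x (k + d) + prefix_y (l + e)] (mod total)"
proof
  let ?xs' = "take d (drop k xs)" and ?ys' = "drop (l + e) ys @ take l ys"
  define \<alpha> where "\<alpha> = sum_list (map a ?xs')"
  define \<beta> where "\<beta> = sum_list (map b (take e (drop l ys)))"
  assume "[prefix_x k + prefix_y l = prefix_x (k + d) + prefix_y (l + e)] (mod total)"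
  then have "[(prefix_x k + prefix_y l) + 0 = (prefix_x k + prefix_y l) + (\<alpha> + \<beta>)] (mod total)"
    unfolding sum_list_map_take_add \<alpha>_def \<beta>_def by (simp add: ac_simps)
  then have "total dvd \<alpha> + \<beta>"
    by (metis cong_add_lcancel_nat cong_0_iff cong_sym)
  moreover have "\<alpha> < total"
    using prefix_x_less[OF assms(1)] by (simp add: sum_list_map_take_add \<alpha>_def)
  moreover have "0 < \<beta>" "prefix_y l + \<beta> < total"
    using prefix_y_less[OF assms(2)] sum_list_map_take_less[OF pos_b, of 0 "take e (drop l ys)"]
      assms(2,3) by (simp_all add: sum_list_map_take_add \<beta>_def)
  ultimately have "\<alpha> + \<beta> = total"
    by (intro dvd_less_double_imp_eq) simp_all
  \<comment> \<open>so the cyclic segment complementary to the y-segment has the weight of the x-segment\<close>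
  moreover have "total = prefix_y (l + e) + sum_list (map b (drop (l + e) ys))"
    by (metis balanced append_take_drop_id map_append sum_list_append)
  ultimately have "sum_list (map a ?xs') = sum_list (map b ?ys')"
    unfolding sum_list_map_take_add \<alpha>_def \<beta>_def by simp
  then have "?ys' = []"
    using indecomposable[OF mset_take_drop_subset[OF assms(1)]
        mset_drop_append_take_subseteq[of l "l + e"]]
    by simp
  with assms(2) show False by simp
qed

lemma congruent_prefixes_eq:
  assumes "k \<le> k'" "k' < length xs" "l < length ys" "l' < length ys"
    and "[prefix_x k + prefix_y l' = prefix_x k' + prefix_y l] (mod total)"
  shows "k = k' \<and> l = l'"
proof -
  define d where "d = k' - k"
  then have d: "k' = k + d" using assms(1) by simp
  show ?thesis
  proof (cases "l \<le> l'")
    case True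
    then have "l' = l + (l' - l)" by simp
    then show ?thesis using congruent_shifted_prefixes[of k d l "l' - l"] assms d by simp
  next
    case False
    then have "l = l' + (l - l')" "0 < l - l'" by simp_all
    then show ?thesis using wrapped_prefixes_not_congruent[of k d l' "l - l'"] assms d by simp
  qed
qed

lemma prefix_differences_congruent:
  assumes "l < length ys" "l' < length ys"
    and "(prefix_x k + (total - prefix_y l)) mod total
      = (prefix_x k' + (total - prefix_y l')) mod total"
  shows "[prefix_x k + prefix_y l' = prefix_x k' + prefix_y l] (mod total)"
proof -
  have "[prefix_x k + (total - prefix_y l) + (prefix_y l + prefix_y l')
      = prefix_x k' + (total - prefix_y l') + (prefix_y l + prefix_y l')] (mod total)"
    using assms(3) unfolding cong_def[symmetric] by (rule cong_add[OF _ cong_refl])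
  moreover have "prefix_x k + (total - prefix_y l) + (prefix_y l + prefix_y l')
      = (prefix_x k + prefix_y l') + total"
    "prefix_x k' + (total - prefix_y l') + (prefix_y l + prefix_y l')
      = (prefix_x k' + prefix_y l) + total"
    using prefix_y_less[OF assms(1)] prefix_y_less[OF assms(2)] by linarith+
  ultimately show ?thesis by (simp only: cong_add_rcancel_nat)
qed

text \<open>The residue of \<open>prefix_x k - prefix_y l\<close>, shifted by \<open>total\<close> to avoid truncated
  subtraction.\<close>

lemma prefix_differences_inj:
  "inj_on (\<lambda>(k, l). (prefix_x k + (total - prefix_y l)) mod total)
    ({..<length xs} \<times> {..<length ys})"
proof (rule inj_onI, clarsimp)
  fix k l k' l'
  assume bounds: "k < length xs" "l < length ys" "k' < length xs" "l' < length ys"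
    and "(prefix_x k + (total - prefix_y l)) mod total
      = (prefix_x k' + (total - prefix_y l')) mod total"
  then have cong: "[prefix_x k + prefix_y l' = prefix_x k' + prefix_y l] (mod total)"
    by (intro prefix_differences_congruent)
  show "k = k' \<and> l = l'"
  proof (cases "k \<le> k'")
    case True
    then show ?thesis using congruent_prefixes_eq bounds cong by blast
  next
    case False
    then show ?thesis
      using congruent_prefixes_eq[of k' k l' l] bounds cong by (simp add: cong_sym_eq)
  qed
qed

lemma length_mult_le_total: "length xs * length ys \<le> total"
proof (cases "xs = [] \<or> ys = []")
  case False
  then have "0 < total" using prefix_x_less[of 0] by simp
  have "length xs * length ys = card ({..<length xs} \<times> {..<length ys})"
    by (simp add: card_cartesian_product)
  also have "\<dots> \<le> card {..<total}"
    by (rule card_inj_on_le[OF prefix_differences_inj]) (auto simp: \<open>0 < total\<close>)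
  finally show ?thesis by simp
qed auto

end

lemma ex_list_count_list:
  fixes f :: "'a::finite \<Rightarrow> nat"
  shows "\<exists>xs. \<forall>i. count_list xs i = f i"
proof -
  obtain xs where "mset xs = Abs_multiset f" using ex_mset by blast
  then have "count_list xs i = f i" for i by (simp add: count_mset[symmetric] count_Abs_multiset)
  then show ?thesis by blast
qed

lemma sum_list_map_eq_sum_UNIV_count:
  fixes xs :: "'a::finite list"
  shows "sum_list (map f xs) = (\<Sum>i\<in>UNIV. count_list xs i * f i)"
  by (rule sum_list_map_eq_sum_count2) simp_all

lemma is_solution_add_sol_cancel:
  assumes "is_solution a b (add_sol u v)" and "is_solution a b u"
  shows "is_solution a b v"
  using assms unfolding is_solution_def add_sol_def by (simp add: distrib_right sum.distrib)

lemma minimal_solution_le_cases: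
  assumes "is_minimal_solution a b s" and "is_solution a b u"
    and "\<And>i. fst u i \<le> fst s i" and "\<And>j. snd u j \<le> snd s j"
  shows "u = zero_sol \<or> u = s"
proof -
  define v where "v = ((\<lambda>i. fst s i - fst u i), (\<lambda>j. snd s j - snd u j))"
  have "s = add_sol u v" using assms(3,4) by (simp add: add_sol_def v_def prod_eq_iff fun_eq_iff)
  moreover from this have "is_solution a b v"
    using assms(1,2) is_solution_add_sol_cancel unfolding is_minimal_solution_def by metis
  ultimately have "u = zero_sol \<or> v = zero_sol"
    using assms(1,2) unfolding is_minimal_solution_def by blast
  moreover have "u = s" if "v = zero_sol"
    using that assms(3,4) by (simp add: v_def zero_sol_def prod_eq_iff fun_eq_iff le_antisym)
  ultimately show ?thesis by blast
qed

lemma minimal_solution_indecomposable_words: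
  fixes a :: "'n::finite \<Rightarrow> nat" and b :: "'m::finite \<Rightarrow> nat"
  assumes "\<And>i. 0 < a i" and "\<And>j. 0 < b j"
    and minimal: "is_minimal_solution a b s"
    and xs: "\<And>i. count_list xs i = fst s i" and ys: "\<And>j. count_list ys j = snd s j"
  shows "indecomposable_words a b xs ys"
proof
  have "is_solution a b s" using minimal by (simp add: is_minimal_solution_def)
  then show "sum_list (map a xs) = sum_list (map b ys)"
    by (simp add: is_solution_def sum_list_map_eq_sum_UNIV_count xs ys)
  fix xs' ys'
  assume sub_x: "mset xs' \<subset># mset xs" and sub_y: "mset ys' \<subseteq># mset ys"
    and "sum_list (map a xs') = sum_list (map b ys')"
  then have "is_solution a b (count_list xs', count_list ys')"
    by (simp add: is_solution_def sum_list_map_eq_sum_UNIV_count)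
  moreover have "count_list xs' i \<le> fst s i" "count_list ys' j \<le> snd s j" for i j
    using sub_x sub_y xs ys
    by (auto simp: subseteq_mset_def count_mset dest: subset_mset.less_imp_le)
  ultimately have "(count_list xs', count_list ys') = zero_sol \<or> (count_list xs', count_list ys') = s"
    using minimal_solution_le_cases[OF minimal] by simp
  moreover have "count_list xs' \<noteq> fst s"
  proof
    assume "count_list xs' = fst s"
    then have "mset xs' = mset xs" by (simp add: multiset_eqI count_mset xs)
    with sub_x show False by simp
  qed
  ultimately show "xs' = [] \<and> ys' = []"
    by (auto simp: zero_sol_def fun_eq_iff count_list_0_iff)
qed (use assms in auto)

lemma minimal_solution_size_bound:
  fixes a :: "'n::finite \<Rightarrow> nat" and b :: "'m::finite \<Rightarrow> nat"
  assumes "\<And>i. 0 < a i" and "\<And>j. 0 < b j" and "is_minimal_solution a b s"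
  shows "(\<Sum>i\<in>UNIV. fst s i) * (\<Sum>j\<in>UNIV. snd s j) \<le> (\<Sum>i\<in>UNIV. fst s i * a i)"
proof -
  obtain xs :: "'n list" where xs: "\<And>i. count_list xs i = fst s i"
    using ex_list_count_list[of "fst s"] by blast
  obtain ys :: "'m list" where ys: "\<And>j. count_list ys j = snd s j"
    using ex_list_count_list[of "snd s"] by blast
  interpret indecomposable_words a b xs ys
    using minimal_solution_indecomposable_words[OF assms xs ys] .
  have "length xs = (\<Sum>i\<in>UNIV. fst s i)" "length ys = (\<Sum>j\<in>UNIV. snd s j)"
    using sum_list_map_eq_sum_UNIV_count[of "\<lambda>_. 1::nat" xs]
      sum_list_map_eq_sum_UNIV_count[of "\<lambda>_. 1::nat" ys] by (simp_all add: xs ys sum_list_triv)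
  moreover have "total = (\<Sum>i\<in>UNIV. fst s i * a i)"
    by (simp add: sum_list_map_eq_sum_UNIV_count xs)
  ultimately show ?thesis using length_mult_le_total by simp
qed

lemma solution_weight_pos:
  fixes a :: "'n::finite \<Rightarrow> nat" and b :: "'m::finite \<Rightarrow> nat"
  assumes "is_solution a b s" and "s \<noteq> zero_sol"
    and "\<And>i. 0 < a i" and "\<And>j. 0 < b j"
  shows "0 < (\<Sum>i\<in>UNIV. fst s i * a i)"
proof (rule ccontr)
  assume "\<not> 0 < (\<Sum>i\<in>UNIV. fst s i * a i)"
  then have "(\<Sum>i\<in>UNIV. fst s i * a i) = 0" by simp
  moreover from this have "(\<Sum>j\<in>UNIV. snd s j * b j) = 0"
    using \<open>is_solution a b s\<close> by (metis is_solution_def)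
  ultimately have "fst s = (\<lambda>_. 0)" "snd s = (\<lambda>_. 0)"
    using assms(3,4) by (simp_all add: fun_eq_iff) (metis neq0_conv)+
  with \<open>s \<noteq> zero_sol\<close> show False by (simp add: zero_sol_def prod_eq_iff)
qed

lemma emb_solution_eq_sum_gen:
  fixes a :: "'n::finite \<Rightarrow> nat" and b :: "'m::finite \<Rightarrow> nat"
  assumes "is_solution a b s" and "0 < A" and A: "A = (\<Sum>i\<in>UNIV. fst s i * a i)"
  shows "emb s = (\<Sum>i\<in>UNIV. \<Sum>j\<in>UNIV.
    (real (fst s i) * real (snd s j) / real A) *\<^sub>R emb (gen a b i j))"
    (is "_ = ?sum")
proof -
  have A': "A = (\<Sum>j\<in>UNIV. snd s j * b j)" using assms(1) A by (simp add: is_solution_def)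
  have "fst ?sum $ k = real (fst s k)" for k
  proof -
    have "fst ?sum $ k = (\<Sum>j\<in>UNIV. real (fst s k) * real (snd s j) / real A * real (b j))"
      by (simp add: fst_sum emb_def gen_def sum_UNIV_eq_single[where i = k])
    also have "\<dots> = real (fst s k) / real A * real (\<Sum>j\<in>UNIV. snd s j * b j)"
      by (simp add: sum_distrib_left ac_simps)
    finally show ?thesis using \<open>0 < A\<close> by (simp add: A'[symmetric])
  qed
  moreover have "snd ?sum $ l = real (snd s l)" for l
  proof -
    have "snd ?sum $ l = (\<Sum>i\<in>UNIV. real (fst s i) * real (snd s l) / real A * real (a i))"
      by (simp add: snd_sum emb_def gen_def sum_UNIV_eq_single[where i = l])
    also have "\<dots> = real (snd s l) / real A * real (\<Sum>i\<in>UNIV. fst s i * a i)"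
      by (simp add: sum_distrib_left ac_simps)
    finally show ?thesis using \<open>0 < A\<close> by (simp add: A[symmetric])
  qed
  ultimately show ?thesis by (simp add: emb_def prod_eq_iff vec_eq_iff)
qed

lemma sum_in_convex_hull_insert_zero:
  fixes z :: "'i \<Rightarrow> 'a::real_vector"
  assumes "finite I" and "\<And>p. p \<in> I \<Longrightarrow> 0 \<le> \<mu> p" and "sum \<mu> I \<le> 1"
    and "\<And>p. p \<in> I \<Longrightarrow> z p \<in> S"
  shows "(\<Sum>p\<in>I. \<mu> p *\<^sub>R z p) \<in> convex hull (insert 0 S)"
proof (cases "sum \<mu> I = 0")
  case True
  then have "(\<Sum>p\<in>I. \<mu> p *\<^sub>R z p) = 0"
    using assms(1,2) by (simp add: sum_nonneg_eq_0_iff)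
  then show ?thesis by (simp add: hull_inc)
next
  case False
  define t where "t = sum \<mu> I"
  have "0 < t" using False assms(2) by (simp add: t_def order.not_eq_order_implies_strict sum_nonneg)
  have "(\<Sum>p\<in>I. (\<mu> p / t) *\<^sub>R z p) \<in> convex hull S"
  proof (rule convex_sum[OF assms(1) convex_convex_hull])
    show "(\<Sum>p\<in>I. \<mu> p / t) = 1" using \<open>0 < t\<close> by (simp add: t_def sum_divide_distrib[symmetric])
  qed (use assms(2,4) \<open>0 < t\<close> in \<open>auto intro: hull_inc\<close>)
  then have "(\<Sum>p\<in>I. (\<mu> p / t) *\<^sub>R z p) \<in> convex hull (insert 0 S)"
    by (meson hull_mono subsetD subset_insertI)
  then have "(1 - t) *\<^sub>R 0 + t *\<^sub>R (\<Sum>p\<in>I. (\<mu> p / t) *\<^sub>R z p) \<in> convex hull (insert 0 S)"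
    using \<open>0 < t\<close> assms(3) unfolding t_def[symmetric]
    by (intro convexD[OF convex_convex_hull]) (auto intro: hull_inc)
  moreover have "t *\<^sub>R (\<Sum>p\<in>I. (\<mu> p / t) *\<^sub>R z p) = (\<Sum>p\<in>I. \<mu> p *\<^sub>R z p)"
    using \<open>0 < t\<close> by (simp add: scaleR_sum_right)
  ultimately show ?thesis by simp
qed

lemma emb_minimal_solution_in_convex_hull:
  fixes a :: "'n::finite \<Rightarrow> nat" and b :: "'m::finite \<Rightarrow> nat"
  assumes "\<And>i. 0 < a i" and "\<And>j. 0 < b j" and "is_minimal_solution a b s"
  shows "emb s \<in> convex hull (insert 0 {emb (gen a b i j) | i j. True})"
proof -
  define A where "A = (\<Sum>i\<in>UNIV. fst s i * a i)"
  define \<mu> where "\<mu> = (\<lambda>(i, j). real (fst s i) * real (snd s j) / real A)"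
  have "is_solution a b s" "s \<noteq> zero_sol"
    using assms(3) by (simp_all add: is_minimal_solution_def)
  then have "0 < A" unfolding A_def using assms(1,2) by (rule solution_weight_pos)
  have "emb s = (\<Sum>p\<in>UNIV. \<mu> p *\<^sub>R emb (gen a b (fst p) (snd p)))"
    using emb_solution_eq_sum_gen[OF \<open>is_solution a b s\<close> \<open>0 < A\<close> A_def]
    by (simp add: \<mu>_def sum.cartesian_product split_def flip: UNIV_Times_UNIV)
  moreover have "sum \<mu> UNIV \<le> 1"
  proof -
    have "sum \<mu> UNIV = (\<Sum>i\<in>UNIV. \<Sum>j\<in>UNIV. real (fst s i) * real (snd s j)) / real A"
      by (simp add: \<mu>_def sum_divide_distrib sum.cartesian_product split_def
          flip: UNIV_Times_UNIV)
    also have "\<dots> = real ((\<Sum>i\<in>UNIV. fst s i) * (\<Sum>j\<in>UNIV. snd s j)) / real A"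
      by (simp add: sum_product)
    also have "\<dots> \<le> 1"
      using minimal_solution_size_bound[OF assms, folded A_def] \<open>0 < A\<close>
      by (subst divide_le_eq_1_pos) (simp_all only: of_nat_le_iff of_nat_0_less_iff)
    finally show ?thesis .
  qed
  moreover have "0 \<le> \<mu> p" for p by (simp add: \<mu>_def split: prod.split)
  ultimately show ?thesis
    using sum_in_convex_hull_insert_zero[where I = UNIV and \<mu> = \<mu>
        and z = "\<lambda>p. emb (gen a b (fst p) (snd p))" and S = "{emb (gen a b i j) | i j. True}"]
    by auto
qed

lemma emb_zero_sol [simp]: "emb zero_sol = 0"
  by (simp add: emb_def zero_sol_def zero_prod_def vec_eq_iff)

lemma convex_hull_hilbert_basis_eq:
  fixes a :: "'n::finite \<Rightarrow> nat" and b :: "'m::finite \<Rightarrow> nat"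
  assumes "\<And>i. 0 < a i" and "\<And>j. 0 < b j" and "\<forall>i j. coprime (a i) (b j)"
  shows "convex hull (emb ` (hilbert_basis a b \<union> {zero_sol}))
    = convex hull (insert 0 {emb (gen a b i j) | i j. True})"
proof (rule antisym)
  show "convex hull (emb ` (hilbert_basis a b \<union> {zero_sol}))
    \<subseteq> convex hull (insert 0 {emb (gen a b i j) | i j. True})"
    using emb_minimal_solution_in_convex_hull[where a = a and b = b, OF assms(1,2)]
    by (intro convex_hull_subset) (auto simp: hilbert_basis_def hull_inc)
  show "convex hull (insert 0 {emb (gen a b i j) | i j. True})
    \<subseteq> convex hull (emb ` (hilbert_basis a b \<union> {zero_sol}))"
    using assms by (intro hull_mono) (auto simp: hilbert_basis_def is_minimal_solution_gen)
qed

lemma notin_convex_hull_if_separated: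
  fixes p c :: "'a::real_inner"
  assumes "\<And>q. q \<in> S \<Longrightarrow> inner c q < inner c p"
  shows "p \<notin> convex hull S"
proof -
  have "convex hull S \<subseteq> {x. inner c x < inner c p}"
    using assms by (intro hull_minimal convex_halfspace_lt) auto
  then show ?thesis by auto
qed

lemma inner_emb_gen: "inner (u, v) (emb (gen a b i j)) = u $ i * real (b j) + v $ j * real (a i)"
  by (simp add: emb_def gen_def inner_vec_def sum_UNIV_eq_single[where i = i]
      sum_UNIV_eq_single[where i = j])

lemma zero_notin_convex_hull_gen:
  fixes a :: "'n::finite \<Rightarrow> nat" and b :: "'m::finite \<Rightarrow> nat"
  assumes "\<And>i. 0 < a i" and "\<And>j. 0 < b j"
  shows "0 \<notin> convex hull {emb (gen a b i j) | i j. True}"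
proof (rule notin_convex_hull_if_separated[where c = "(\<chi> _. -1, \<chi> _. -1)"])
  fix q assume "q \<in> {emb (gen a b i j) | i j. True}"
  then obtain i j where "q = emb (gen a b i j)" by blast
  moreover have "0 < real (a i)" "0 < real (b j)" using assms by simp_all
  ultimately show "inner (\<chi> _. -1, \<chi> _. -1) q < inner (\<chi> _. -1, \<chi> _. -1) 0"
    by (simp add: inner_emb_gen)
qed

lemma gen_notin_convex_hull_others:
  fixes a :: "'n::finite \<Rightarrow> nat" and b :: "'m::finite \<Rightarrow> nat"
  assumes "\<And>i. 0 < a i" and "\<And>j. 0 < b j"
  shows "emb (gen a b i j)
    \<notin> convex hull (insert 0 {emb (gen a b i j) | i j. True} - {emb (gen a b i j)})"
proof -
  define c where "c = ((\<chi> k. (if k = i then 1 else -1) * real (a k)),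
    (\<chi> l. (if l = j then 1 else -1) * real (b l)))"
  have val: "inner c (emb (gen a b i' j')) =
      ((if i' = i then 1 else -1) + (if j' = j then 1 else -1)) * (real (a i') * real (b j'))"
    for i' j'
    by (simp add: c_def inner_emb_gen algebra_simps)
  show ?thesis
  proof (rule notin_convex_hull_if_separated[where c = c])
    have pos: "0 < real (a i') * real (b j')" for i' j' using assms by simp
    fix q assume "q \<in> insert 0 {emb (gen a b i j) | i j. True} - {emb (gen a b i j)}"
    then consider "q = 0" | i' j' where "q = emb (gen a b i' j')" "(i', j') \<noteq> (i, j)"
      by blast
    then show "inner c q < inner c (emb (gen a b i j))"
    proof cases
      case 1
      then show ?thesis using val[of i j] pos[of i j] by simp
    next
      case 2
      then have "inner c q \<le> 0" using val[of i' j'] pos[of i' j'] by (auto simp: mult_nonpos_nonneg)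
      then show ?thesis using val[of i j] pos[of i j] by simp
    qed
  qed
qed

lemma extreme_point_of_convex_hull_gen_iff:
  fixes a :: "'n::finite \<Rightarrow> nat" and b :: "'m::finite \<Rightarrow> nat"
  assumes "\<And>i. 0 < a i" and "\<And>j. 0 < b j"
  shows "p extreme_point_of (convex hull (insert 0 {emb (gen a b i j) | i j. True}))
    \<longleftrightarrow> p \<in> insert 0 {emb (gen a b i j) | i j. True}"
proof (rule extreme_point_of_convex_hull_convex_independent)
  have "{emb (gen a b i j) | i j. True} = (\<lambda>(i, j). emb (gen a b i j)) ` UNIV" by force
  then show "compact (insert 0 {emb (gen a b i j) | i j. True})" by (simp add: finite_imp_compact)
  fix q assume "q \<in> insert 0 {emb (gen a b i j) | i j. True}"
  then show "q \<notin> convex hull (insert 0 {emb (gen a b i j) | i j. True} - {q})"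
    using zero_notin_convex_hull_gen[where a = a and b = b, OF assms]
      gen_notin_convex_hull_others[where a = a and b = b, OF assms]
    by (auto dest: subsetD[OF hull_mono, rotated])
qed

theorem corollary3:
  fixes a :: "'n::finite \<Rightarrow> nat" and b :: "'m::finite \<Rightarrow> nat"
  assumes "\<forall>i. a i \<ge> 1" and "\<forall>j. b j \<ge> 1"
    and "\<forall>i j. coprime (a i) (b j)"
  shows "(\<forall>i j. gen a b i j \<in> hilbert_basis a b) \<and>
    {p. p extreme_point_of (convex hull (emb ` (hilbert_basis a b \<union> {zero_sol})))}
      = {0} \<union> {emb (gen a b i j) | i j. True}"
proof -
  have pos_a: "\<And>i. 0 < a i" and pos_b: "\<And>j. 0 < b j"
    using assms(1,2) by (simp_all add: Suc_le_eq)
  have "\<forall>i j. gen a b i j \<in> hilbert_basis a b"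
    using assms(3) by (simp add: hilbert_basis_def is_minimal_solution_gen pos_a pos_b)
  moreover have "{p. p extreme_point_of (convex hull (emb ` (hilbert_basis a b \<union> {zero_sol})))}
      = insert 0 {emb (gen a b i j) | i j. True}"
    unfolding convex_hull_hilbert_basis_eq[OF pos_a pos_b assms(3)]
    using extreme_point_of_convex_hull_gen_iff[where a = a and b = b, OF pos_a pos_b] by blast
  ultimately show ?thesis by simp
qed

end
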